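(* Let $U$ and $V$ be linear subspaces of $\mathbb{R}^d$ such that $U\cap V^\perp=\{0\}$. Then there exists a positive definite linear map $H:\mathbb{R}^d\to\mathbb{R}^d$ such that $H(U)\subset V$. *)

theory Defs
  imports "HOL-Analysis.Analysis"
begin

definition pos_def_matrix :: "real^'n^'n \<Rightarrow> bool" where
  "pos_def_matrix H \<longleftrightarrow> transpose H = H \<and> (\<forall>x. x \<noteq> 0 \<longrightarrow> x \<bullet> (H *v x) > 0)"

end

theory Submission
  imports Defs
begin

text \<open>Let \<open>Q\<close> be the orthogonal projection onto \<open>V\<close> and \<open>P = id - Q\<close>. Since \<open>U \<inter> V\<^sup>\<bottom> = {0}\<close>,
  \<open>Q\<close> is injective on \<open>U\<close>; for a linear left inverse \<open>g\<close> of \<open>Q\<close> on \<open>U\<close>, the map \<open>T = P g Q\<close>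
  sends \<open>V\<close> to \<open>V\<^sup>\<bottom>\<close>, vanishes on \<open>V\<^sup>\<bottom>\<close>, and \<open>U\<close> lies in its graph \<open>{w + T w}\<close>. With respect
  to \<open>V \<oplus> V\<^sup>\<bottom>\<close> the self-adjoint operator \<open>H = c Q + P - T - T\<^sup>*\<close> has block form
  \<open>[[c, -T\<^sup>*], [-T, 1]]\<close>, so it maps \<open>w + T w\<close> to \<open>c w - T\<^sup>* T w \<in> V\<close>. If \<open>\<parallel>T x\<parallel> \<le> K \<parallel>x\<parallel>\<close>,
  its quadratic form at \<open>a + b\<close> (\<open>a \<in> V\<close>, \<open>b \<in> V\<^sup>\<bottom>\<close>) is at least
  \<open>(c - K\<^sup>2) \<parallel>a\<parallel>\<^sup>2 + (K \<parallel>a\<parallel> - \<parallel>b\<parallel>)\<^sup>2\<close>, so \<open>H\<close> is positive definite once \<open>c > K\<^sup>2\<close>.\<close>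

locale orthogonal_projection =
  fixes V :: "'a::real_inner set" and Q :: "'a \<Rightarrow> 'a"
  assumes subspace: "subspace V"
    and proj_in: "Q x \<in> V"
    and residual_orthogonal: "x - Q x \<in> V\<^sup>\<bottom>"
begin

lemma eq_0_if_in_both: "a \<in> V \<Longrightarrow> a \<in> V\<^sup>\<bottom> \<Longrightarrow> a = 0"
  using orthogonal_Int_0[OF subspace] by blast

lemma linear: "linear Q"
proof
  fix x y :: 'a and r :: real
  have "Q (x + y) - Q x - Q y \<in> V"
    by (simp add: proj_in subspace subspace_diff)
  moreover have "Q (x + y) - Q x - Q y = (x - Q x) + (y - Q y) - (x + y - Q (x + y))"
    by (simp add: algebra_simps)
  then have "Q (x + y) - Q x - Q y \<in> V\<^sup>\<bottom>"
    by (metis residual_orthogonal subspace_orthogonal_comp subspace_add subspace_diff)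
  ultimately show "Q (x + y) = Q x + Q y"
    using eq_0_if_in_both by (metis diff_diff_eq eq_iff_diff_eq_0)
  have "Q (r *\<^sub>R x) - r *\<^sub>R Q x \<in> V"
    by (simp add: proj_in subspace subspace_diff subspace_scale)
  moreover have "Q (r *\<^sub>R x) - r *\<^sub>R Q x = r *\<^sub>R (x - Q x) - (r *\<^sub>R x - Q (r *\<^sub>R x))"
    by (simp add: algebra_simps)
  then have "Q (r *\<^sub>R x) - r *\<^sub>R Q x \<in> V\<^sup>\<bottom>"
    by (metis residual_orthogonal subspace_orthogonal_comp subspace_scale subspace_diff)
  ultimately show "Q (r *\<^sub>R x) = r *\<^sub>R Q x"
    using eq_0_if_in_both by (metis eq_iff_diff_eq_0)
qed

lemma inner_residual: "v \<in> V \<Longrightarrow> v \<bullet> (x - Q x) = 0"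
  using residual_orthogonal by (auto simp: orthogonal_comp_def orthogonal_def)

lemma self_adjoint: "Q x \<bullet> y = x \<bullet> Q y"
proof -
  have "Q x \<bullet> y = Q x \<bullet> Q y"
    using inner_residual[OF proj_in, of x y] by (simp add: inner_diff_right)
  also have "\<dots> = x \<bullet> Q y"
    using inner_residual[OF proj_in, of y x] by (simp add: inner_diff_right inner_commute)
  finally show ?thesis .
qed

lemma fixes_subspace: "v \<in> V \<Longrightarrow> Q v = v"
  using eq_0_if_in_both[of "v - Q v"] by (simp add: proj_in residual_orthogonal subspace subspace_diff)

lemma eq_0_iff_orthogonal_comp: "Q x = 0 \<longleftrightarrow> x \<in> V\<^sup>\<bottom>"
proof
  show "Q x = 0 \<Longrightarrow> x \<in> V\<^sup>\<bottom>"
    using residual_orthogonal[of x] by simp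
  assume "x \<in> V\<^sup>\<bottom>"
  then have "Q x \<in> V\<^sup>\<bottom>"
    using subspace_diff[OF subspace_orthogonal_comp _ residual_orthogonal, of x x] by simp
  then show "Q x = 0"
    using eq_0_if_in_both proj_in by simp
qed

lemma inner_proj_eq_norm: "x \<bullet> Q x = (norm (Q x))\<^sup>2"
  using inner_residual[OF proj_in, of x x]
  by (simp add: power2_norm_eq_inner inner_diff_right inner_commute)

lemma inner_residual_eq_norm: "x \<bullet> (x - Q x) = (norm (x - Q x))\<^sup>2"
  using inner_residual[OF proj_in, of x x]
  by (simp add: power2_norm_eq_inner inner_diff_left)

definition block_operator :: "real \<Rightarrow> ('a \<Rightarrow> 'a) \<Rightarrow> ('a \<Rightarrow> 'a) \<Rightarrow> 'a \<Rightarrow> 'a" where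
  "block_operator c T T' x = c *\<^sub>R Q x + (x - Q x) - T x - T' x"

lemma linear_block_operator:
  assumes "linear T" and "linear T'"
  shows "linear (block_operator c T T')"
  unfolding block_operator_def linear_iff using linear assms
  by (simp add: linear_add linear_scale algebra_simps)

lemma block_operator_self_adjoint:
  assumes "\<And>x y. T x \<bullet> y = x \<bullet> T' y"
  shows "block_operator c T T' x \<bullet> y = x \<bullet> block_operator c T T' y"
proof -
  have "T' x \<bullet> y = x \<bullet> T y"
    using assms[of y x] by (simp add: inner_commute)
  have "block_operator c T T' x \<bullet> y = c * (Q x \<bullet> y) + (x \<bullet> y - Q x \<bullet> y) - T x \<bullet> y - T' x \<bullet> y"
    by (simp add: block_operator_def inner_add_left inner_diff_left)
  also have "\<dots> = c * (x \<bullet> Q y) + (x \<bullet> y - x \<bullet> Q y) - x \<bullet> T' y - x \<bullet> T y"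
    by (simp add: self_adjoint assms \<open>T' x \<bullet> y = x \<bullet> T y\<close>)
  also have "\<dots> = x \<bullet> block_operator c T T' y"
    by (simp add: block_operator_def inner_add_right inner_diff_right)
  finally show ?thesis .
qed

lemma block_operator_pos:
  assumes T_into: "\<And>x. T x \<in> V\<^sup>\<bottom>" and T_proj: "\<And>x. T x = T (Q x)"
    and T_bound: "\<And>x. norm (T x) \<le> K * norm x"
    and T'_adjoint: "\<And>x y. T x \<bullet> y = x \<bullet> T' y"
    and "c > K\<^sup>2" and "x \<noteq> 0"
  shows "x \<bullet> block_operator c T T' x > 0"
proof -
  define a where "a = norm (Q x)"
  define b where "b = norm (x - Q x)"
  have "Q x \<bullet> T x = 0"
    using T_into[of x] proj_in[of x] by (auto simp: orthogonal_comp_def orthogonal_def)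
  then have "x \<bullet> T x = (x - Q x) \<bullet> T (Q x)"
    using T_proj[of x] by (simp add: inner_diff_left)
  then have "\<bar>x \<bullet> T x\<bar> \<le> b * (K * a)"
    unfolding a_def b_def
    by (metis Cauchy_Schwarz_ineq2 T_bound mult_left_mono norm_ge_zero order_trans)
  moreover have "x \<bullet> T' x = x \<bullet> T x"
    using T'_adjoint[of x x] by (simp add: inner_commute)
  moreover have "x \<bullet> block_operator c T T' x
      = c * (x \<bullet> Q x) + x \<bullet> (x - Q x) - x \<bullet> T x - x \<bullet> T' x"
    by (simp add: block_operator_def inner_add_right inner_diff_right)
  ultimately have "x \<bullet> block_operator c T T' x \<ge> c * a\<^sup>2 + b\<^sup>2 - 2 * (b * (K * a))"
    unfolding inner_proj_eq_norm inner_residual_eq_norm a_def b_def by (simp add: abs_le_iff)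
  moreover have "c * a\<^sup>2 + b\<^sup>2 - 2 * (b * (K * a)) = (c - K\<^sup>2) * a\<^sup>2 + (K * a - b)\<^sup>2"
    by (simp add: power2_eq_square algebra_simps)
  moreover have "a \<noteq> 0 \<or> b \<noteq> 0"
    using \<open>x \<noteq> 0\<close> unfolding a_def b_def by auto
  then have "(c - K\<^sup>2) * a\<^sup>2 + (K * a - b)\<^sup>2 > 0"
    using \<open>c > K\<^sup>2\<close> by (cases "a = 0") (auto intro: add_pos_nonneg add_nonneg_pos)
  ultimately show ?thesis
    by linarith
qed

end

lemma orthogonal_projection_exists:
  fixes V :: "'a::euclidean_space set"
  assumes "subspace V"
  obtains Q where "orthogonal_projection V Q"
proof -
  have "\<exists>y. y \<in> V \<and> x - y \<in> V\<^sup>\<bottom>" for x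
  proof -
    obtain y z where "y \<in> span V" and "\<And>w. w \<in> span V \<Longrightarrow> orthogonal z w" and "x = y + z"
      using orthogonal_subspace_decomp_exists[of V x] by blast
    moreover have "span V = V"
      using assms by (simp add: span_eq_iff)
    ultimately have "y \<in> V \<and> x - y \<in> V\<^sup>\<bottom>"
      by (auto simp: orthogonal_comp_def orthogonal_commute)
    then show ?thesis ..
  qed
  then obtain Q where "\<And>x. Q x \<in> V \<and> x - Q x \<in> V\<^sup>\<bottom>"
    by metis
  then have "orthogonal_projection V Q"
    using assms by (simp add: orthogonal_projection_def)
  then show ?thesis ..
qed

lemma range_adjoint_subset:
  fixes T :: "'a::euclidean_space \<Rightarrow> 'b::euclidean_space"
  assumes "linear T" and "subspace V" and "\<And>w. w \<in> V\<^sup>\<bottom> \<Longrightarrow> T w = 0"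
  shows "range (adjoint T) \<subseteq> V"
proof -
  have "V\<^sup>\<bottom> \<subseteq> (range (adjoint T))\<^sup>\<bottom>"
    using assms(3) ker_orthogonal_comp_adjoint[OF assms(1)] by blast
  then have "(range (adjoint T))\<^sup>\<bottom>\<^sup>\<bottom> \<subseteq> V"
    using orthogonal_comp_anti_mono orthogonal_comp_self[OF assms(2)] by metis
  then show ?thesis
    using orthogonal_comp_subset by blast
qed

lemma exists_self_adjoint_pos_map_into:
  fixes U V :: "'a::euclidean_space set"
  assumes "subspace U" and "subspace V" and "U \<inter> V\<^sup>\<bottom> = {0}"
  obtains h where "linear h" and "\<And>x y. h x \<bullet> y = x \<bullet> h y"
    and "\<And>x. x \<noteq> 0 \<Longrightarrow> x \<bullet> h x > 0" and "h ` U \<subseteq> V"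
proof -
  obtain Q where "orthogonal_projection V Q"
    using orthogonal_projection_exists[OF assms(2)] by blast
  then interpret orthogonal_projection V Q .
  have "span U = U"
    using assms(1) by (simp add: span_eq_iff)
  have "inj_on Q U"
    unfolding linear_inj_on_iff_eq_0[OF linear assms(1)]
    using assms(3) eq_0_iff_orthogonal_comp by blast
  then obtain g where "linear g" and g_left_inverse: "\<And>u. u \<in> U \<Longrightarrow> g (Q u) = u"
    using linear_inj_on_left_inverse[OF linear, of U] \<open>span U = U\<close> by auto
  define T where "T x = g (Q x) - Q (g (Q x))" for x
  have "linear T"
    unfolding T_def linear_iff using linear \<open>linear g\<close>
    by (simp add: linear_add linear_scale algebra_simps)
  obtain K where T_bound: "\<And>x. norm (T x) \<le> K * norm x"
    using linear_bounded_pos[OF \<open>linear T\<close>] by blast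
  have "T w = 0" if "w \<in> V\<^sup>\<bottom>" for w
    using that eq_0_iff_orthogonal_comp[of w] by (simp add: T_def linear_0[OF \<open>linear g\<close>] linear_0[OF linear])
  then have adjoint_T_into: "range (adjoint T) \<subseteq> V"
    using range_adjoint_subset[OF \<open>linear T\<close> assms(2)] by blast
  define h where "h = block_operator (K\<^sup>2 + 1) T (adjoint T)"
  show thesis
  proof
    show "linear h"
      by (simp add: h_def linear_block_operator \<open>linear T\<close> adjoint_linear)
    show "h x \<bullet> y = x \<bullet> h y" for x y
      by (simp add: h_def block_operator_self_adjoint adjoint_works[OF \<open>linear T\<close>])
    show "x \<bullet> h x > 0" if "x \<noteq> 0" for x
      unfolding h_def
    proof (rule block_operator_pos[OF _ _ T_bound])
      show "T x = T (Q x)" for x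
        by (simp add: T_def fixes_subspace proj_in)
    qed (simp_all add: T_def residual_orthogonal adjoint_works[OF \<open>linear T\<close>] that)
    have "h u = (K\<^sup>2 + 1) *\<^sub>R Q u - adjoint T u" if "u \<in> U" for u
      using that by (simp add: h_def block_operator_def T_def g_left_inverse)
    then show "h ` U \<subseteq> V"
      using adjoint_T_into by (auto intro!: subspace_diff subspace_scale assms(2) proj_in)
  qed
qed

lemma pos_def_matrix_matrix:
  fixes h :: "real^'n \<Rightarrow> real^'n"
  assumes "linear h" and "\<And>x y. h x \<bullet> y = x \<bullet> h y" and "\<And>x. x \<noteq> 0 \<Longrightarrow> x \<bullet> h x > 0"
  shows "pos_def_matrix (matrix h)"
proof -
  have matrix_h: "matrix h *v x = h x" for x
    using matrix_vector_mul(2)[OF assms(1)] by metis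
  have "adjoint h = h"
    using adjoint_unique assms(2) by blast
  then have "transpose (matrix h) = matrix h"
    using matrix_adjoint[OF assms(1)] by simp
  then show ?thesis
    using assms(3) by (simp add: pos_def_matrix_def matrix_h)
qed

theorem lemma7:
  fixes U V :: "(real^'n) set"
  assumes "subspace U" and "subspace V"
    and "U \<inter> orthogonal_comp V = {0}"
  shows "\<exists>H :: real^'n^'n. pos_def_matrix H \<and> (\<lambda>x. H *v x) ` U \<subseteq> V"
proof -
  obtain h where "linear h" "\<And>x y. h x \<bullet> y = x \<bullet> h y" "\<And>x. x \<noteq> 0 \<Longrightarrow> x \<bullet> h x > 0"
    and "h ` U \<subseteq> V"
    using exists_self_adjoint_pos_map_into assms by blast
  then have "pos_def_matrix (matrix h)" and "(\<lambda>x. matrix h *v x) ` U \<subseteq> V"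
    by (simp_all add: pos_def_matrix_matrix)
  then show ?thesis
    by blast
qed

end
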